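(* Let $\alpha\in\mathbb{F}_q^*$ and let $g(x)=\sum_{i=0}^ka_ix^i\in\mathbb{F}_q[x;\theta]$, with $a_k=1$ and $k\ge1$, be a right divisor of $x^n-\alpha$. Let $T_g$ be the $k\times k$ companion matrix of $g$, i.e. $(T_g)_{i,i+1}=1$ for $1\le i\le k-1$, the last row of $T_g$ is $(-a_0,-a_1,\dots,-a_{k-1})$, and all other entries are $0$. Let $P=(1,0,\dots,0)\in\mathbb{F}_q^k$ and $\tau=\Theta\circ T_g$. Then a linear code $\mathscr{C}\subseteq\mathbb{F}_q^n$ is the skew $\alpha$-cyclic $[n,n-k]$-code with generator polynomial $g(x)$ if and only if $\mathscr{C}$ is the code with parity check matrix $$[\,{}^tP,\ {}^t(P\tau),\ {}^t(P\tau^2),\ \dots,\ {}^t(P\tau^{n-1})\,].$$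
   Context: Let $\mathbb{F}_q$ be a finite field, $\theta$ a field automorphism of $\mathbb{F}_q$, and $\mathbb{F}_q[x;\theta]$ the skew polynomial ring with $xa=\theta(a)x$. A linear code $\mathscr{C}\subseteq\mathbb{F}_q^n$ is skew $\alpha$-cyclic if it is invariant under $(c_0,\dots,c_{n-1})\mapsto(\alpha\theta(c_{n-1}),\theta(c_0),\dots,\theta(c_{n-2}))$. Identifying $(a_0,\dots,a_{n-1})$ with the class of $\sum a_ix^i$ in the left module $\mathbb{F}_q[x;\theta]/\mathbb{F}_q[x;\theta](x^n-\alpha)$, the skew $\alpha$-cyclic code with generator polynomial $g$ (a monic right divisor of $x^n-\alpha$) is the left submodule generated by $g$; it has dimension $n-\deg g$. Vectors are row vectors, ${}^tv$ denotes the transpose, and $P\tau:=\Theta(P)T_g$ where $\Theta$ applies $\theta$ coordinatewise; $\tau^i$ is the $i$-fold iterate. The code with parity check matrix $H$ is $\{\vec c:\vec c\,{}^tH=0\}$. *)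

theory Defs
  imports "HOL-Computational_Algebra.Polynomial"
begin

text \<open>Skew polynomials in F_q[x;theta] are represented by their coefficient
  polynomials (type 'a poly); only the multiplication differs:
  (a x^i)(b x^j) = a theta^i(b) x^(i+j).\<close>

definition field_automorphism :: "('a::field \<Rightarrow> 'a) \<Rightarrow> bool" where
  "field_automorphism \<theta> \<longleftrightarrow> bij \<theta> \<and> (\<forall>a b. \<theta> (a + b) = \<theta> a + \<theta> b)
     \<and> (\<forall>a b. \<theta> (a * b) = \<theta> a * \<theta> b) \<and> \<theta> 1 = 1"

definition skew_mult :: "('a::field \<Rightarrow> 'a) \<Rightarrow> 'a poly \<Rightarrow> 'a poly \<Rightarrow> 'a poly" where
  "skew_mult \<theta> p q =
     (\<Sum>i\<le>degree p. \<Sum>j\<le>degree q. monom (coeff p i * (\<theta> ^^ i) (coeff q j)) (i + j))"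

definition xn_minus :: "nat \<Rightarrow> 'a::field \<Rightarrow> 'a poly" where
  "xn_minus n \<alpha> = monom 1 n - [:\<alpha>:]"

definition right_divides :: "('a::field \<Rightarrow> 'a) \<Rightarrow> 'a poly \<Rightarrow> 'a poly \<Rightarrow> bool" where
  "right_divides \<theta> g f \<longleftrightarrow> (\<exists>h. f = skew_mult \<theta> h g)"

definition vec_to_poly :: "'a::field list \<Rightarrow> 'a poly" where
  "vec_to_poly c = (\<Sum>i<length c. monom (c ! i) i)"

definition linear_code :: "nat \<Rightarrow> 'a::field list set \<Rightarrow> bool" where
  "linear_code n C \<longleftrightarrow> C \<subseteq> {v. length v = n} \<and> replicate n 0 \<in> C
     \<and> (\<forall>u\<in>C. \<forall>v\<in>C. map2 (+) u v \<in> C) \<and> (\<forall>a. \<forall>u\<in>C. map ((*) a) u \<in> C)"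

text \<open>The skew alpha-cyclic code with generator g: vectors whose class in
  F_q[x;theta]/F_q[x;theta](x^n - alpha) lies in the left submodule generated by g.\<close>
definition skew_cyclic_code :: "('a::field \<Rightarrow> 'a) \<Rightarrow> nat \<Rightarrow> 'a \<Rightarrow> 'a poly \<Rightarrow> 'a list set" where
  "skew_cyclic_code \<theta> n \<alpha> g = {c. length c = n \<and>
     (\<exists>h q. vec_to_poly c = skew_mult \<theta> h g + skew_mult \<theta> q (xn_minus n \<alpha>))}"

text \<open>Companion matrix T_g (k x k, indices 0..k-1), k = degree g.\<close>
definition companion :: "'a::field poly \<Rightarrow> nat \<Rightarrow> nat \<Rightarrow> 'a" where
  "companion g i j = (let k = degree g in
     if i + 1 < k then (if j = i + 1 then 1 else 0)
     else if i + 1 = k \<and> j < k then - coeff g j else 0)"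

definition vec_mat :: "nat \<Rightarrow> (nat \<Rightarrow> 'a::field) \<Rightarrow> (nat \<Rightarrow> nat \<Rightarrow> 'a) \<Rightarrow> nat \<Rightarrow> 'a" where
  "vec_mat k v M = (\<lambda>j. \<Sum>i<k. v i * M i j)"

definition tau :: "('a::field \<Rightarrow> 'a) \<Rightarrow> 'a poly \<Rightarrow> (nat \<Rightarrow> 'a) \<Rightarrow> nat \<Rightarrow> 'a" where
  "tau \<theta> g P = vec_mat (degree g) (\<theta> \<circ> P) (companion g)"

definition P0 :: "nat \<Rightarrow> 'a::field" where
  "P0 = (\<lambda>i. if i = 0 then 1 else 0)"

definition parity_matrix :: "('a::field \<Rightarrow> 'a) \<Rightarrow> 'a poly \<Rightarrow> nat \<Rightarrow> nat \<Rightarrow> 'a" where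
  "parity_matrix \<theta> g r i = ((tau \<theta> g ^^ i) P0) r"

definition code_of_parity :: "nat \<Rightarrow> nat \<Rightarrow> (nat \<Rightarrow> nat \<Rightarrow> 'a::field) \<Rightarrow> 'a list set" where
  "code_of_parity n k H = {c. length c = n \<and> (\<forall>r<k. (\<Sum>i<n. c ! i * H r i) = 0)}"

end

theory Submission imports Defs begin

text \<open>Write \<open>R(p) = \<Sum>\<^sub>i p\<^sub>i P\<tau>\<^sup>i\<close> for the syndrome of a skew polynomial \<open>p\<close>, so that
  \<open>R(p)\<close> is \<open>c \<^sup>tH\<close> for the coefficient vector \<open>c\<close> of \<open>p\<close>. Since \<open>\<tau>\<close> is
  \<open>\<theta>\<close>-semilinear, \<open>R(hf) = \<Sum>\<^sub>i h\<^sub>i \<tau>\<^sup>i(R(f))\<close>: multiplying by \<open>x\<close> on the left acts as \<open>\<tau>\<close>.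
  Because \<open>T\<^sub>g\<close> is the companion matrix, \<open>P\<tau>\<^sup>i\<close> is the \<open>i\<close>-th unit vector for \<open>i < k\<close>
  and \<open>P\<tau>\<^sup>k = -(a\<^sub>0,\<dots>,a\<^sub>k\<^sub>-\<^sub>1)\<close>, hence \<open>R(g) = 0\<close> and \<open>R\<close> vanishes on the left ideal
  generated by \<open>g\<close>, which contains \<open>x\<^sup>n - \<alpha>\<close>. Conversely, dividing \<open>p\<close> on the right by the
  monic \<open>g\<close> leaves a remainder of degree \<open>< k\<close>, whose syndrome is its own coefficient vector;
  so \<open>R(p) = 0\<close> exactly when \<open>g\<close> right-divides \<open>p\<close>.\<close>

definition syndrome :: "('a::field \<Rightarrow> 'a) \<Rightarrow> 'a poly \<Rightarrow> 'a poly \<Rightarrow> nat \<Rightarrow> 'a" where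
  "syndrome \<theta> g p r = (\<Sum>i<Suc (degree p). coeff p i * (tau \<theta> g ^^ i) P0 r)"

lemma sum_lessThan_eq_if_vanishing:
  fixes f :: "nat \<Rightarrow> 'b::comm_monoid_add"
  assumes "\<forall>i\<ge>N. f i = 0" "\<forall>i\<ge>M. f i = 0"
  shows "sum f {..<N} = sum f {..<M}"
proof -
  have "sum f {..<K} = sum f {..<max N M}" if "\<forall>i\<ge>K. f i = 0" "K \<le> max N M" for K
    using that by (intro sum.mono_neutral_left) auto
  from this[of N] this[of M] assms show ?thesis by simp
qed

lemma coeff_vec_to_poly: "coeff (vec_to_poly c) i = (if i < length c then c ! i else 0)"
  by (simp add: vec_to_poly_def coeff_sum)

context
  fixes \<theta> :: "'a::field \<Rightarrow> 'a"
  assumes \<theta>_add: "\<And>a b. \<theta> (a + b) = \<theta> a + \<theta> b"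
    and \<theta>_mult: "\<And>a b. \<theta> (a * b) = \<theta> a * \<theta> b"
    and \<theta>_one: "\<theta> 1 = 1"
begin

lemma \<theta>_zero: "\<theta> 0 = 0"
  using \<theta>_add[of 0 0] by (metis add_cancel_right_right add_0)

lemma \<theta>_sum: "\<theta> (sum f A) = (\<Sum>i\<in>A. \<theta> (f i))"
  by (induct A rule: infinite_finite_induct) (auto simp: \<theta>_zero \<theta>_add)

lemma funpow_\<theta>_zero: "(\<theta> ^^ m) 0 = 0"
  by (induct m) (auto simp: \<theta>_zero)

lemma funpow_\<theta>_one: "(\<theta> ^^ m) 1 = 1"
  by (induct m) (auto simp: \<theta>_one)

lemma skew_mult_eq_sum:
  assumes "\<forall>i\<ge>N. coeff p i = 0" "\<forall>j\<ge>M. coeff q j = 0"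
  shows "skew_mult \<theta> p q = (\<Sum>i<N. \<Sum>j<M. monom (coeff p i * (\<theta> ^^ i) (coeff q j)) (i + j))"
proof -
  have "skew_mult \<theta> p q = (\<Sum>i<Suc (degree p). \<Sum>j<Suc (degree q).
          monom (coeff p i * (\<theta> ^^ i) (coeff q j)) (i + j))"
    by (simp add: skew_mult_def lessThan_Suc_atMost)
  also have "\<dots> = (\<Sum>i<Suc (degree p). \<Sum>j<M. monom (coeff p i * (\<theta> ^^ i) (coeff q j)) (i + j))"
    by (intro sum.cong refl sum_lessThan_eq_if_vanishing)
      (use assms in \<open>auto simp: coeff_eq_0 funpow_\<theta>_zero\<close>)
  also have "\<dots> = (\<Sum>i<N. \<Sum>j<M. monom (coeff p i * (\<theta> ^^ i) (coeff q j)) (i + j))"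
    by (intro sum_lessThan_eq_if_vanishing) (use assms in \<open>auto simp: coeff_eq_0\<close>)
  finally show ?thesis .
qed

lemma skew_mult_0_left: "skew_mult \<theta> 0 q = 0"
  by (simp add: skew_mult_def)

lemma skew_mult_add_left: "skew_mult \<theta> (p1 + p2) q = skew_mult \<theta> p1 q + skew_mult \<theta> p2 q"
proof -
  define N where "N = Suc (max (degree p1) (degree p2))"
  have "degree (p1 + p2) < N"
    using degree_add_le_max[of p1 p2] by (simp add: N_def)
  then have expand: "skew_mult \<theta> p q = (\<Sum>i<N. \<Sum>j<Suc (degree q).
      monom (coeff p i * (\<theta> ^^ i) (coeff q j)) (i + j))" if "p \<in> {p1, p2, p1 + p2}" for p
    using that by (intro skew_mult_eq_sum) (auto simp: coeff_eq_0 N_def)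
  show ?thesis
    by (simp only: expand insert_iff simp_thms coeff_add distrib_right add_monom[symmetric]
        sum.distrib)
qed

lemma coeff_skew_mult_monom:
  assumes "m \<le> t"
  shows "coeff (skew_mult \<theta> (monom a m) g) t = a * (\<theta> ^^ m) (coeff g (t - m))"
proof -
  have "skew_mult \<theta> (monom a m) g = (\<Sum>i<Suc m. \<Sum>j<Suc (degree g).
          monom (coeff (monom a m) i * (\<theta> ^^ i) (coeff g j)) (i + j))"
    by (intro skew_mult_eq_sum) (auto simp: coeff_eq_0)
  also have "\<dots> = (\<Sum>j<Suc (degree g). monom (a * (\<theta> ^^ m) (coeff g j)) (m + j))"
    by (simp del: sum.lessThan_Suc add: lessThan_Suc)
  finally have "coeff (skew_mult \<theta> (monom a m) g) t
      = (\<Sum>j<Suc (degree g). coeff (monom (a * (\<theta> ^^ m) (coeff g j)) (m + j)) t)"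
    by (simp add: coeff_sum)
  also have "\<dots> = (\<Sum>j<Suc (degree g). if j = t - m then a * (\<theta> ^^ m) (coeff g j) else 0)"
    by (intro sum.cong) (use assms in auto)
  also have "\<dots> = a * (\<theta> ^^ m) (coeff g (t - m))"
    by (auto simp: coeff_eq_0 funpow_\<theta>_zero)
  finally show ?thesis .
qed

lemma skew_right_division:
  assumes "lead_coeff g = 1"
  shows "\<exists>h r. p = skew_mult \<theta> h g + r \<and> (\<forall>i\<ge>degree g. coeff r i = 0)"
proof -
  have "\<exists>h r. p = skew_mult \<theta> h g + r \<and> (\<forall>i\<ge>degree g. coeff r i = 0)"
    if "\<forall>i\<ge>N. coeff p i = 0" for N p
    using that
  proof (induction N arbitrary: p)
    case 0
    then show ?case by (intro exI[of _ 0] exI[of _ p]) (simp add: skew_mult_0_left)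
  next
    case (Suc N)
    show ?case
    proof (cases "N < degree g")
      case True
      with Suc.prems show ?thesis
        by (intro exI[of _ 0] exI[of _ p]) (simp add: skew_mult_0_left)
    next
      case False
      define m where "m = N - degree g"
      define q where "q = skew_mult \<theta> (monom (coeff p N) m) g"
      \<comment> \<open>subtracting \<open>q\<close> cancels the coefficient of \<open>x\<^sup>N\<close>, as \<open>\<theta>\<^sup>m(1) = 1\<close>\<close>
      have "coeff (p - q) i = 0" if "N \<le> i" for i
        using that False Suc.prems assms
        by (cases "i = N") (auto simp: q_def m_def coeff_skew_mult_monom funpow_\<theta>_one
            funpow_\<theta>_zero coeff_eq_0)
      then obtain h r where "p - q = skew_mult \<theta> h g + r" "\<forall>i\<ge>degree g. coeff r i = 0"
        using Suc.IH by blast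
      then have "p = skew_mult \<theta> (monom (coeff p N) m + h) g + r"
        by (simp add: skew_mult_add_left q_def algebra_simps)
      with \<open>\<forall>i\<ge>degree g. coeff r i = 0\<close> show ?thesis by blast
    qed
  qed
  from this[of "Suc (degree p)" p] show ?thesis
    by (simp add: coeff_eq_0)
qed

lemma tau_sum:
  "tau \<theta> g (\<lambda>r. \<Sum>i\<in>A. c i * f i r) = (\<lambda>r. \<Sum>i\<in>A. \<theta> (c i) * tau \<theta> g (f i) r)"
proof
  fix j
  have "tau \<theta> g (\<lambda>r. \<Sum>i\<in>A. c i * f i r) j
      = (\<Sum>l<degree g. \<Sum>i\<in>A. \<theta> (c i) * (\<theta> (f i l) * companion g l j))"
    by (simp add: tau_def vec_mat_def \<theta>_sum \<theta>_mult sum_distrib_right mult.assoc)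
  also have "\<dots> = (\<Sum>i\<in>A. \<theta> (c i) * tau \<theta> g (f i) j)"
    by (subst sum.swap) (simp add: tau_def vec_mat_def sum_distrib_left)
  finally show "tau \<theta> g (\<lambda>r. \<Sum>i\<in>A. c i * f i r) j = (\<Sum>i\<in>A. \<theta> (c i) * tau \<theta> g (f i) j)" .
qed

lemma funpow_tau_sum:
  "(tau \<theta> g ^^ m) (\<lambda>r. \<Sum>i\<in>A. c i * f i r)
     = (\<lambda>r. \<Sum>i\<in>A. (\<theta> ^^ m) (c i) * (tau \<theta> g ^^ m) (f i) r)"
  by (induct m) (simp_all add: tau_sum)

lemma syndrome_eq_sum:
  assumes "\<forall>i\<ge>N. coeff p i = 0"
  shows "syndrome \<theta> g p r = (\<Sum>i<N. coeff p i * (tau \<theta> g ^^ i) P0 r)"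
  unfolding syndrome_def
  by (rule sum_lessThan_eq_if_vanishing) (use assms in \<open>auto intro: coeff_eq_0\<close>)

lemma syndrome_add: "syndrome \<theta> g (p + q) r = syndrome \<theta> g p r + syndrome \<theta> g q r"
proof -
  define N where "N = Suc (max (degree p) (degree q))"
  have "degree (p + q) < N"
    using degree_add_le_max[of p q] by (simp add: N_def)
  then have "syndrome \<theta> g f r = (\<Sum>i<N. coeff f i * (tau \<theta> g ^^ i) P0 r)"
    if "f \<in> {p, q, p + q}" for f
    using that by (intro syndrome_eq_sum) (auto simp: N_def coeff_eq_0)
  then show ?thesis
    by (simp add: sum.distrib distrib_right)
qed

lemma syndrome_sum: "syndrome \<theta> g (\<Sum>i\<in>A. p i) r = (\<Sum>i\<in>A. syndrome \<theta> g (p i) r)"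
  by (induct A rule: infinite_finite_induct) (simp_all add: syndrome_add syndrome_def[where p = 0])

lemma syndrome_monom: "syndrome \<theta> g (monom b l) r = b * (tau \<theta> g ^^ l) P0 r"
proof -
  have "syndrome \<theta> g (monom b l) r = (\<Sum>i<Suc l. coeff (monom b l) i * (tau \<theta> g ^^ i) P0 r)"
    by (rule syndrome_eq_sum) auto
  then show ?thesis by (simp add: if_distrib cong: if_cong)
qed

lemma syndrome_skew_mult:
  "syndrome \<theta> g (skew_mult \<theta> h f) r
     = (\<Sum>i<Suc (degree h). coeff h i * (tau \<theta> g ^^ i) (syndrome \<theta> g f) r)"
proof -
  define N M where "N = Suc (degree h)" and "M = Suc (degree f)"
  have "skew_mult \<theta> h f = (\<Sum>i<N. \<Sum>j<M. monom (coeff h i * (\<theta> ^^ i) (coeff f j)) (i + j))"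
    by (intro skew_mult_eq_sum) (auto simp: coeff_eq_0 N_def M_def)
  then have "syndrome \<theta> g (skew_mult \<theta> h f) r
      = (\<Sum>i<N. \<Sum>j<M. coeff h i * (\<theta> ^^ i) (coeff f j) * (tau \<theta> g ^^ (i + j)) P0 r)"
    by (simp only: syndrome_sum syndrome_monom)
  also have "\<dots> = (\<Sum>i<N. coeff h i * (tau \<theta> g ^^ i) (syndrome \<theta> g f) r)"
  proof -
    have "syndrome \<theta> g f = (\<lambda>r. \<Sum>j<M. coeff f j * (tau \<theta> g ^^ j) P0 r)"
      by (rule ext) (simp only: syndrome_def M_def)
    then show ?thesis
      by (simp add: funpow_tau_sum funpow_add sum_distrib_left mult.assoc)
  qed
  finally show ?thesis by (simp add: N_def M_def)
qed

lemma syndrome_skew_mult_eq_0: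
  "syndrome \<theta> g f = (\<lambda>r. 0) \<Longrightarrow> syndrome \<theta> g (skew_mult \<theta> h f) = (\<lambda>r. 0)"
  using funpow_tau_sum[where A = "{}"] by (intro ext) (simp add: syndrome_skew_mult)

lemma syndrome_vec_to_poly:
  "syndrome \<theta> g (vec_to_poly c) r = (\<Sum>i<length c. c ! i * parity_matrix \<theta> g r i)"
  by (subst syndrome_eq_sum[of "length c"]) (auto simp: coeff_vec_to_poly parity_matrix_def)

lemma tau_unit_vector:
  assumes "j < degree g"
  shows "tau \<theta> g (\<lambda>r. if r = j then 1 else 0) = companion g j"
proof -
  have "\<theta> (if r = j then 1 else 0) * x = (if r = j then x else 0)" for r and x :: 'a
    by (simp add: \<theta>_zero \<theta>_one)
  with assms show ?thesis
    by (intro ext) (simp add: tau_def vec_mat_def)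
qed

lemma funpow_tau_P0:
  "j < degree g \<Longrightarrow> (tau \<theta> g ^^ j) P0 = (\<lambda>r. if r = j then 1 else 0)"
proof (induction j)
  case 0
  then show ?case by (simp add: P0_def)
next
  case (Suc j)
  then show ?case by (auto simp: tau_unit_vector companion_def)
qed

lemma syndrome_of_low_degree:
  assumes "\<forall>i\<ge>degree g. coeff p i = 0" "j < degree g"
  shows "syndrome \<theta> g p j = coeff p j"
proof -
  have "syndrome \<theta> g p j = (\<Sum>i<degree g. coeff p i * (tau \<theta> g ^^ i) P0 j)"
    using assms(1) by (rule syndrome_eq_sum)
  also have "\<dots> = (\<Sum>i<degree g. if i = j then coeff p i else 0)"
    by (intro sum.cong) (auto simp: funpow_tau_P0)
  finally show ?thesis using assms(2) by simp
qed

context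
  fixes g :: "'a poly"
  assumes monic: "lead_coeff g = 1" and degree_pos: "degree g \<ge> 1"
begin

lemma funpow_tau_P0_degree:
  "(tau \<theta> g ^^ degree g) P0 = (\<lambda>r. if r < degree g then - coeff g r else 0)"
proof -
  obtain m where m: "degree g = Suc m"
    using degree_pos by (cases "degree g") auto
  then have "(tau \<theta> g ^^ degree g) P0 = companion g m"
    by (simp add: funpow_tau_P0 tau_unit_vector)
  then show ?thesis by (auto simp: companion_def m)
qed

lemma syndrome_generator: "syndrome \<theta> g g = (\<lambda>r. 0)"
proof
  fix r
  have "syndrome \<theta> g g r = (\<Sum>i<degree g. coeff g i * (tau \<theta> g ^^ i) P0 r)
      + coeff g (degree g) * (tau \<theta> g ^^ degree g) P0 r"
    by (simp add: syndrome_def)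
  also have "(\<Sum>i<degree g. coeff g i * (tau \<theta> g ^^ i) P0 r)
      = (\<Sum>i<degree g. if r = i then coeff g i else 0)"
    by (intro sum.cong) (auto simp: funpow_tau_P0)
  finally show "syndrome \<theta> g g r = 0"
    using monic by (simp add: funpow_tau_P0_degree)
qed

lemma syndrome_right_multiple: "right_divides \<theta> g p \<Longrightarrow> syndrome \<theta> g p = (\<lambda>r. 0)"
  by (auto simp: right_divides_def syndrome_generator syndrome_skew_mult_eq_0)

lemma right_divides_iff_syndrome_eq_0:
  "right_divides \<theta> g p \<longleftrightarrow> (\<forall>j<degree g. syndrome \<theta> g p j = 0)"
proof
  assume "right_divides \<theta> g p"
  then show "\<forall>j<degree g. syndrome \<theta> g p j = 0"
    by (simp add: syndrome_right_multiple)
next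
  assume syndrome_0: "\<forall>j<degree g. syndrome \<theta> g p j = 0"
  obtain h r where p: "p = skew_mult \<theta> h g + r" and r: "\<forall>i\<ge>degree g. coeff r i = 0"
    using skew_right_division[OF monic] by blast
  have "syndrome \<theta> g p j = coeff r j" if "j < degree g" for j
    using syndrome_of_low_degree[OF r that]
    by (simp add: p syndrome_add syndrome_generator syndrome_skew_mult_eq_0)
  with syndrome_0 r have "r = 0"
    by (metis leI coeff_0 poly_eqI)
  with p show "right_divides \<theta> g p"
    unfolding right_divides_def by auto
qed

lemma skew_cyclic_code_eq_code_of_parity:
  assumes "right_divides \<theta> g (xn_minus n \<alpha>)"
  shows "skew_cyclic_code \<theta> n \<alpha> g = code_of_parity n (degree g) (parity_matrix \<theta> g)"
proof -
  have "(\<exists>h q. p = skew_mult \<theta> h g + skew_mult \<theta> q (xn_minus n \<alpha>))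
      \<longleftrightarrow> right_divides \<theta> g p" for p
  proof
    assume "\<exists>h q. p = skew_mult \<theta> h g + skew_mult \<theta> q (xn_minus n \<alpha>)"
    then obtain h q where "p = skew_mult \<theta> h g + skew_mult \<theta> q (xn_minus n \<alpha>)"
      by blast
    then have "syndrome \<theta> g p r = 0" for r
      using syndrome_right_multiple[OF assms]
      by (simp add: syndrome_add syndrome_generator syndrome_skew_mult_eq_0)
    then show "right_divides \<theta> g p"
      by (simp add: right_divides_iff_syndrome_eq_0)
  next
    assume "right_divides \<theta> g p"
    then show "\<exists>h q. p = skew_mult \<theta> h g + skew_mult \<theta> q (xn_minus n \<alpha>)"
      by (metis right_divides_def skew_mult_0_left add_0_right)
  qed
  then show ?thesis
    by (auto simp: skew_cyclic_code_def code_of_parity_def right_divides_iff_syndrome_eq_0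
        syndrome_vec_to_poly)
qed

end

end

theorem mainTheorem6:
  fixes \<theta> :: "'a::{field,finite} \<Rightarrow> 'a" and \<alpha> :: 'a and g :: "'a poly"
    and n :: nat and C :: "'a list set"
  assumes "field_automorphism \<theta>"
    and "\<alpha> \<noteq> 0"
    and "lead_coeff g = 1" and "degree g \<ge> 1"
    and "right_divides \<theta> g (xn_minus n \<alpha>)"
    and "linear_code n C"
  shows "C = skew_cyclic_code \<theta> n \<alpha> g \<longleftrightarrow>
         C = code_of_parity n (degree g) (parity_matrix \<theta> g)"
proof -
  from assms(1) have "\<And>a b. \<theta> (a + b) = \<theta> a + \<theta> b" "\<And>a b. \<theta> (a * b) = \<theta> a * \<theta> b" "\<theta> 1 = 1"
    by (simp_all add: field_automorphism_def)
  from skew_cyclic_code_eq_code_of_parity[OF this assms(3-5)] show ?thesis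
    by simp
qed

end
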